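(* Let $\mathcal{H}$ be a real Hilbert space, $N\geq1$, $i\in\{1,\ldots,N\}$, and $f_i\in\Gamma_0(\mathcal{H})$ with $\operatorname{dom}f_i=\mathcal{H}$. Let $\phi=\iota_{]-\infty,0]}$ and define $B_i\colon\mathcal{H}\times\mathbb{R}^N\to2^{\mathcal{H}\times\mathbb{R}^N}$ by $B_i(x,p)=\left(p_i\partial f_i(x),\ \partial\phi^*(p_i)e_i-f_i(x)e_i\right)$, where $e_i$ is the $i$-th canonical vector of $\mathbb{R}^N$. Then: (i) $B_i$ is maximally monotone. (ii) Let $(x,p)\in\mathcal{H}\times\mathbb{R}^N$, $\gamma>0$, and let $\overline{\omega}$ be the unique real number in $[0,+\infty[$ such that $\overline{\omega}=0$ if $p_i+\gamma f_i(x)\leq0$ and $\overline{\omega}=p_i+\gamma f_i(P_{\gamma\overline{\omega}}f_i(x))$ if $p_i+\gamma f_i(x)>0$. Then $J_{\gamma B_i}(x,p)=(x,\omega)$ if $p_i+\gamma f_i(x)\leq0$ and $J_{\gamma B_i}(x,p)=(P_{\gamma\omega_i}f_i(x),\omega)$ if $p_i+\gamma f_i(x)>0$, where $\omega_i=\overline{\omega}$ and $\omega_j=p_j$ for all $j\neq i$.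
   Context: $\Gamma_0(\mathcal{H})$: proper lsc convex functions. $\iota_S$ is the indicator function of $S$ ($0$ on $S$, $+\infty$ outside); $\phi^*$ is the Fenchel conjugate, so $\phi^*=\iota_{[0,+\infty[}$ and $\partial\phi^*(s)$ is the normal cone to $[0,+\infty[$ at $s$ (empty if $s<0$). $\partial$ is the convex subdifferential. $J_A=(\mathrm{Id}+A)^{-1}$ is the resolvent. $P_\mu g(x)=\operatorname{argmin}_y\{g(y)+\frac1{2\mu}\|x-y\|^2\}$ for $\mu>0$, and $P_0 g=\mathrm{Id}$. $\mathcal{H}\times\mathbb{R}^N$ carries the product Hilbert structure. *)

theory Defs
  imports "HOL-Analysis.Analysis"
begin

text \<open>Extended-real-valued functions model functions into ]-inf,+inf]; the Hilbert space
  is a type of class real_inner + complete_space.\<close>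

definition lsc :: "('a::topological_space \<Rightarrow> real) \<Rightarrow> bool" where
  "lsc f \<longleftrightarrow> (\<forall>c. closed {x. f x \<le> c})"

definition indic :: "'a set \<Rightarrow> 'a \<Rightarrow> ereal" where
  "indic S x = (if x \<in> S then 0 else \<infinity>)"

definition fconj :: "('a::real_inner \<Rightarrow> ereal) \<Rightarrow> 'a \<Rightarrow> ereal" where
  "fconj g u = (SUP y. ereal (inner u y) - g y)"

definition subdiff :: "('a::real_inner \<Rightarrow> ereal) \<Rightarrow> 'a \<Rightarrow> 'a set" where
  "subdiff g x = {u. g x \<noteq> \<infinity> \<and> (\<forall>y. g x + ereal (inner u (y - x)) \<le> g y)}"

definition phi :: "real \<Rightarrow> ereal" where
  "phi = indic {..0}"

definition monotone_op :: "('a::real_inner \<Rightarrow> 'a set) \<Rightarrow> bool" where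
  "monotone_op A \<longleftrightarrow> (\<forall>x y u v. u \<in> A x \<longrightarrow> v \<in> A y \<longrightarrow> 0 \<le> inner (x - y) (u - v))"

definition max_monotone :: "('a::real_inner \<Rightarrow> 'a set) \<Rightarrow> bool" where
  "max_monotone A \<longleftrightarrow> monotone_op A \<and>
     (\<forall>A'. monotone_op A' \<and> (\<forall>x. A x \<subseteq> A' x) \<longrightarrow> A' = A)"

text \<open>Resolvent J_A = (Id + A)^-1, as a set-valued map.\<close>
definition resolvent :: "('a::real_vector \<Rightarrow> 'a set) \<Rightarrow> 'a \<Rightarrow> 'a set" where
  "resolvent A z = {w. z \<in> (\<lambda>v. w + v) ` A w}"

definition scale_op :: "real \<Rightarrow> ('a::real_vector \<Rightarrow> 'a set) \<Rightarrow> 'a \<Rightarrow> 'a set" where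
  "scale_op \<gamma> A z = (\<lambda>v. \<gamma> *\<^sub>R v) ` A z"

definition prox :: "real \<Rightarrow> ('a::real_normed_vector \<Rightarrow> real) \<Rightarrow> 'a \<Rightarrow> 'a" where
  "prox \<mu> g x = (if \<mu> = 0 then x else
     (THE y. \<forall>z. g y + (norm (x - y))\<^sup>2 / (2 * \<mu>) \<le> g z + (norm (x - z))\<^sup>2 / (2 * \<mu>)))"

definition B_op :: "('n \<Rightarrow> 'a::real_inner \<Rightarrow> real) \<Rightarrow> 'n::finite \<Rightarrow> 'a \<times> (real^'n) \<Rightarrow> ('a \<times> (real^'n)) set" where
  "B_op f i = (\<lambda>(x, p). {(p $ i *\<^sub>R u, t *\<^sub>R axis i 1 - f i x *\<^sub>R axis i 1) | u t.
       u \<in> subdiff (\<lambda>y. ereal (f i y)) x \<and> t \<in> subdiff (fconj phi) (p $ i)})"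

end

theory Submission
  imports Defs
begin

text \<open>
  The resolvent is read off from the optimality system of \<open>(y, q) \<in> J\<^sub>\<gamma>\<^sub>B(x, p)\<close>: the
  coordinates \<open>q\<^sub>j\<close>, \<open>j \<noteq> i\<close>, are unchanged, and either \<open>q\<^sub>i = 0\<close>, \<open>y = x\<close> and
  \<open>p\<^sub>i + \<gamma> f\<^sub>i(x) \<le> 0\<close>, or \<open>q\<^sub>i > 0\<close>, \<open>y = P\<^sub>\<gamma>\<^sub>q\<^sub>i f\<^sub>i(x)\<close> and
  \<open>q\<^sub>i = p\<^sub>i + \<gamma> f\<^sub>i(y)\<close>. The scalar equation for \<open>q\<^sub>i\<close> has at most one solution
  because \<open>\<mu> \<mapsto> f\<^sub>i(P\<^sub>\<mu> f\<^sub>i x)\<close> is nonincreasing, and it has one because the proximal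
  point \<open>y\<close> of the convex function \<open>(p\<^sub>i + \<gamma> f\<^sub>i)\<^sub>+\<^sup>2 / (2\<gamma>)\<close> yields
  \<open>\<omega> = (p\<^sub>i + \<gamma> f\<^sub>i(y))\<^sub>+\<close>. So \<open>Id + B\<^sub>i\<close> is onto, and a monotone operator
  with this property is maximally monotone.

  Two facts about \<open>f\<^sub>i\<close> are needed in a Hilbert space without compactness. Proximal points
  exist: the sublevel sets of the strongly convex Moreau objective form a nested sequence of
  closed sets with vanishing diameters. Every point has a subgradient: the Yosida
  approximations \<open>(x - P\<^sub>\<mu> f\<^sub>i x) / \<mu>\<close> are bounded thanks to an upper bound of \<open>f\<^sub>i\<close>
  near \<open>x\<close> obtained from Baire's theorem, they form a Cauchy sequence as \<open>\<mu> \<rightarrow> 0\<close>, and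
  their limit is a subgradient at \<open>x\<close> by lower semicontinuity.
\<close>

section \<open>Lower semicontinuity and convexity\<close>

lemma nonneg_if_affine_nonneg_near_zero:
  fixes A B :: real
  assumes "\<And>t. 0 < t \<Longrightarrow> t \<le> 1 \<Longrightarrow> 0 \<le> A + t * B"
  shows "0 \<le> A"
proof -
  have "((\<lambda>t. A + t * B) \<longlongrightarrow> A + 0 * B) (at_right 0)"
    by (intro tendsto_intros)
  moreover have "\<forall>\<^sub>F t in at_right 0. 0 \<le> A + t * B"
    unfolding eventually_at_right_field using assms by (intro exI[of _ 1]) auto
  ultimately show ?thesis
    by (simp add: tendsto_lowerbound)
qed

lemma lsc_iff_open_superlevel: "lsc g \<longleftrightarrow> (\<forall>c. open {z. c < g z})"
  unfolding lsc_def by (simp add: closed_def Compl_eq not_le[symmetric] Collect_neg_eq[symmetric])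

lemma lsc_add_continuous:
  assumes "lsc g" and "continuous_on UNIV h"
  shows "lsc (\<lambda>z. g z + h z)"
  unfolding lsc_iff_open_superlevel
proof
  fix c
  have eq: "{z. c < g z + h z} = (\<Union>s. {z. s < g z} \<inter> {z. c - s < h z})"
  proof (intro equalityI subsetI)
    fix z assume "z \<in> {z. c < g z + h z}"
    then show "z \<in> (\<Union>s. {z. s < g z} \<inter> {z. c - s < h z})"
      by (auto intro!: exI[of _ "(g z + c - h z) / 2"] simp: field_simps)
  qed auto
  have "open {z. c - s < h z}" for s
    using assms(2) by (intro open_Collect_less) (auto intro: continuous_on_const)
  then show "open {z. c < g z + h z}"
    unfolding eq using assms(1) unfolding lsc_iff_open_superlevel
    by (intro open_UN ballI open_Int) auto
qed

lemma norm_diff_segment_sq: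
  fixes x y z :: "'a::real_inner"
  shows "(norm (x - (y + t *\<^sub>R (z - y))))\<^sup>2 =
     (norm (x - y))\<^sup>2 - 2 * t * inner (x - y) (z - y) + t\<^sup>2 * (norm (z - y))\<^sup>2"
  unfolding power2_norm_eq_inner
  by (simp add: algebra_simps inner_commute power2_eq_square)

lemma norm_diff_midpoint_sq:
  fixes x a b :: "'a::real_inner"
  shows "(norm (x - ((1/2) *\<^sub>R a + (1/2) *\<^sub>R b)))\<^sup>2 =
     ((norm (x - a))\<^sup>2 + (norm (x - b))\<^sup>2) / 2 - (norm (a - b))\<^sup>2 / 4"
  unfolding power2_norm_eq_inner
  by (simp add: algebra_simps inner_commute) (simp add: field_simps)

lemma convex_on_UNIV_segment_le:
  fixes g :: "'a::real_vector \<Rightarrow> real"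
  assumes "convex_on UNIV g" and "0 \<le> t" "t \<le> 1"
  shows "g (y + t *\<^sub>R (z - y)) \<le> g y + t * (g z - g y)"
proof -
  have "g ((1 - t) *\<^sub>R y + t *\<^sub>R z) \<le> (1 - t) * g y + t * g z"
    using assms by (intro convex_onD) auto
  moreover have "y + t *\<^sub>R (z - y) = (1 - t) *\<^sub>R y + t *\<^sub>R z"
    by (simp add: algebra_simps)
  ultimately show ?thesis
    by (simp add: algebra_simps)
qed

section \<open>Proximal points\<close>

definition prox_objective :: "('a::real_normed_vector \<Rightarrow> real) \<Rightarrow> real \<Rightarrow> 'a \<Rightarrow> 'a \<Rightarrow> real" where
  "prox_objective g \<mu> x y = g y + (norm (x - y))\<^sup>2 / (2 * \<mu>)"

definition is_prox :: "('a::real_normed_vector \<Rightarrow> real) \<Rightarrow> real \<Rightarrow> 'a \<Rightarrow> 'a \<Rightarrow> bool" where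
  "is_prox g \<mu> x y \<longleftrightarrow> (\<forall>z. prox_objective g \<mu> x y \<le> prox_objective g \<mu> x z)"

lemma prox_objective_midpoint_le:
  fixes g :: "'a::real_inner \<Rightarrow> real"
  assumes "convex_on UNIV g" and "\<mu> > 0"
  shows "prox_objective g \<mu> x ((1/2) *\<^sub>R a + (1/2) *\<^sub>R b) \<le>
     (prox_objective g \<mu> x a + prox_objective g \<mu> x b) / 2 - (norm (a - b))\<^sup>2 / (8 * \<mu>)"
proof -
  have "g ((1 - 1/2) *\<^sub>R a + (1/2) *\<^sub>R b) \<le> (1 - 1/2) * g a + (1/2) * g b"
    using assms(1) by (rule convex_onD) auto
  moreover have "((norm (x - a))\<^sup>2 / 2 + (norm (x - b))\<^sup>2 / 2 - (norm (a - b))\<^sup>2 / 4) / (2 * \<mu>) =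
     ((norm (x - a))\<^sup>2 / (2 * \<mu>) + (norm (x - b))\<^sup>2 / (2 * \<mu>)) / 2 - (norm (a - b))\<^sup>2 / (8 * \<mu>)"
    using assms(2) by (simp add: field_simps)
  ultimately show ?thesis
    unfolding prox_objective_def norm_diff_midpoint_sq by (simp add: add_divide_distrib)
qed

lemma prox_objective_near_min_dist:
  fixes g :: "'a::real_inner \<Rightarrow> real"
  assumes "convex_on UNIV g" and "\<mu> > 0"
    and "\<And>z. m \<le> prox_objective g \<mu> x z"
    and "prox_objective g \<mu> x a \<le> m + \<delta>" and "prox_objective g \<mu> x b \<le> m + \<delta>"
  shows "(norm (a - b))\<^sup>2 \<le> 8 * \<mu> * \<delta>"
proof -
  have "m \<le> (prox_objective g \<mu> x a + prox_objective g \<mu> x b) / 2 - (norm (a - b))\<^sup>2 / (8 * \<mu>)"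
    using assms(3) prox_objective_midpoint_le[OF assms(1,2)] by (rule order_trans)
  then have "(norm (a - b))\<^sup>2 / (8 * \<mu>) \<le> \<delta>"
    using assms(4,5) by argo
  then show ?thesis
    using assms(2) by (simp add: field_simps)
qed

lemma is_prox_unique:
  fixes g :: "'a::real_inner \<Rightarrow> real"
  assumes "convex_on UNIV g" and "\<mu> > 0" and "is_prox g \<mu> x y1" and "is_prox g \<mu> x y2"
  shows "y1 = y2"
proof -
  have "(norm (y1 - y2))\<^sup>2 \<le> 8 * \<mu> * 0"
    using assms unfolding is_prox_def
    by (intro prox_objective_near_min_dist[OF assms(1,2), of "prox_objective g \<mu> x y1"]) auto
  then show ?thesis
    by simp
qed

lemma prox_eqI:
  fixes g :: "'a::real_inner \<Rightarrow> real"
  assumes "convex_on UNIV g" and "\<mu> > 0" and "is_prox g \<mu> x y"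
  shows "prox \<mu> g x = y"
proof -
  have "(THE y. is_prox g \<mu> x y) = y"
    using assms is_prox_unique by (intro the_equality) blast+
  then show ?thesis
    using assms(2) unfolding prox_def is_prox_def prox_objective_def by simp
qed

lemma convex_lsc_norm_minorant:
  fixes g :: "'a::real_inner \<Rightarrow> real"
  assumes "convex_on UNIV g" and "lsc g"
  shows "\<exists>s>0. \<forall>z. g x - 1 - norm (z - x) / s \<le> g z"
proof -
  have "open {z. g x - 1 < g z}"
    using assms(2) unfolding lsc_iff_open_superlevel ..
  moreover have "x \<in> {z. g x - 1 < g z}"
    by simp
  ultimately obtain r where r: "r > 0" "ball x r \<subseteq> {z. g x - 1 < g z}"
    using open_contains_ball by blast
  have "g x - 1 - norm (z - x) / (r/2) \<le> g z" for z
  proof (cases "norm (z - x) < r")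
    case True
    then have "g x - 1 < g z"
      using r by (auto simp: dist_norm norm_minus_commute)
    moreover have "0 \<le> norm (z - x) / (r/2)"
      using r by simp
    ultimately show ?thesis
      by linarith
  next
    case False
    define t where "t = (r/2) / norm (z - x)"
    have n: "r \<le> norm (z - x)"
      using False by simp
    have "0 < norm (z - x)"
      using n r by linarith
    then have t: "0 < t" "t \<le> 1" "t * norm (z - x) = r/2"
      using n r by (auto simp: t_def field_simps)
    then have "x + t *\<^sub>R (z - x) \<in> ball x r"
      using r by (simp add: dist_norm)
    then have "g x - 1 < g (x + t *\<^sub>R (z - x))"
      using r by auto
    also have "\<dots> \<le> g x + t * (g z - g x)"
      using assms(1) t by (intro convex_on_UNIV_segment_le) auto
    finally have "- 1 / t < g z - g x"
      using t by (simp add: field_simps)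
    moreover have "1 / t = norm (z - x) / (r/2)"
      using t r by (simp add: field_simps)
    ultimately show ?thesis
      by simp
  qed
  then show ?thesis
    using r(1) by (intro exI[of _ "r/2"]) auto
qed

lemma prox_objective_bdd_below:
  fixes g :: "'a::real_inner \<Rightarrow> real"
  assumes "convex_on UNIV g" and "lsc g" and "\<mu> > 0"
  shows "\<exists>L. \<forall>z. L \<le> prox_objective g \<mu> x z"
proof -
  obtain s where s: "s > 0" "\<And>z. g x - 1 - norm (z - x) / s \<le> g z"
    using convex_lsc_norm_minorant[OF assms(1,2)] by blast
  have "g x - 1 - \<mu> / (2 * s\<^sup>2) \<le> prox_objective g \<mu> x z" for z
  proof -
    define n where "n = norm (x - z)"
    have "0 \<le> (n - \<mu> / s)\<^sup>2 / (2 * \<mu>)"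
      using assms(3) by simp
    also have "\<dots> = n\<^sup>2 / (2 * \<mu>) - n / s + \<mu> / (2 * s\<^sup>2)"
      using assms(3) s(1) by (simp add: field_simps power2_eq_square)
    finally show ?thesis
      using s(2)[of z] unfolding prox_objective_def n_def by (simp add: norm_minus_commute)
  qed
  then show ?thesis
    by blast
qed

lemma is_prox_exists:
  fixes g :: "'a::{real_inner, complete_space} \<Rightarrow> real"
  assumes conv: "convex_on UNIV g" and lsc: "lsc g" and \<mu>: "\<mu> > 0"
  shows "\<exists>y. is_prox g \<mu> x y"
proof -
  let ?G = "prox_objective g \<mu> x"
  obtain L where "\<And>z. L \<le> ?G z"
    using prox_objective_bdd_below[OF conv lsc \<mu>] by blast
  then have bdd: "bdd_below (range ?G)"
    by (rule bdd_belowI2)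
  define m where "m = Inf (range ?G)"
  have m_le: "m \<le> ?G z" for z
    unfolding m_def using bdd by (simp add: cINF_lower)
  define S where "S n = {z. ?G z \<le> m + 1 / (real n + 1)}" for n
  have "lsc ?G"
    unfolding prox_objective_def
    by (intro lsc_add_continuous lsc continuous_intros) (use \<mu> in auto)
  then have "closed (S n)" for n
    unfolding S_def lsc_def by blast
  moreover have "S n \<noteq> {}" for n
  proof -
    have "Inf (range ?G) < m + 1 / (real n + 1)"
      unfolding m_def by (simp add: add_pos_pos)
    then obtain z where "?G z < m + 1 / (real n + 1)"
      using cInf_lessD by blast
    then show ?thesis
      unfolding S_def by (auto intro: less_imp_le)
  qed
  moreover have "S n \<subseteq> S k" if "k \<le> n" for k n
  proof -
    have "1 / (real n + 1) \<le> 1 / (real k + 1)"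
      using that by (simp add: frac_le)
    then show ?thesis
      unfolding S_def by force
  qed
  moreover have "\<exists>n. \<forall>a\<in>S n. \<forall>b\<in>S n. dist a b < \<epsilon>" if "\<epsilon> > 0" for \<epsilon>
  proof -
    obtain n :: nat where "8 * \<mu> / \<epsilon>\<^sup>2 < real n"
      using reals_Archimedean2 by blast
    then have n: "8 * \<mu> / \<epsilon>\<^sup>2 < real n + 1"
      by linarith
    have "norm (a - b) < \<epsilon>" if "a \<in> S n" "b \<in> S n" for a b
    proof -
      have "(norm (a - b))\<^sup>2 \<le> 8 * \<mu> * (1 / (real n + 1))"
        using that unfolding S_def by (intro prox_objective_near_min_dist[OF conv \<mu> m_le]) auto
      also have "\<dots> < \<epsilon>\<^sup>2"
        using n \<mu> \<open>\<epsilon> > 0\<close> by (simp add: field_simps)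
      finally show ?thesis
        using \<open>\<epsilon> > 0\<close> by (simp add: power_less_imp_less_base)
    qed
    then show ?thesis
      by (auto simp: dist_norm)
  qed
  ultimately obtain a where a: "\<And>n. a \<in> S n"
    using decreasing_closed_nest[of S] by blast
  have "?G a \<le> m"
  proof (rule field_le_epsilon)
    fix e :: real assume "e > 0"
    then obtain n where "inverse (real (Suc n)) < e"
      using reals_Archimedean by blast
    then have "1 / (real n + 1) < e"
      by (simp add: inverse_eq_divide add.commute)
    then show "?G a \<le> m + e"
      using a[of n] unfolding S_def by simp
  qed
  then show ?thesis
    unfolding is_prox_def using m_le by (meson order_trans)
qed

text \<open>Here \<open>D\<close> bounds the one-sided derivative of \<open>g\<close> at \<open>y\<close> towards \<open>z\<close>.\<close>

lemma is_prox_inner_le: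
  fixes g :: "'a::real_inner \<Rightarrow> real"
  assumes \<mu>: "\<mu> > 0" and prox: "is_prox g \<mu> x y"
    and incr: "\<And>t. 0 < t \<Longrightarrow> t \<le> 1 \<Longrightarrow> g (y + t *\<^sub>R (z - y)) - g y \<le> t * D + t\<^sup>2 * E"
  shows "inner (x - y) (z - y) \<le> \<mu> * D"
proof -
  define I where "I = inner (x - y) (z - y)"
  define N where "N = (norm (z - y))\<^sup>2"
  have "0 \<le> (D - I / \<mu>) + t * (E + N / (2 * \<mu>))" if t: "0 < t" "t \<le> 1" for t
  proof -
    have "prox_objective g \<mu> x y \<le> prox_objective g \<mu> x (y + t *\<^sub>R (z - y))"
      using prox unfolding is_prox_def by blast
    then have "0 \<le> (g (y + t *\<^sub>R (z - y)) - g y) + (- 2 * t * I + t\<^sup>2 * N) / (2 * \<mu>)"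
      unfolding prox_objective_def norm_diff_segment_sq I_def N_def
      by (simp add: diff_divide_distrib add_divide_distrib)
    then have "0 \<le> t * D + t\<^sup>2 * E + (- 2 * t * I + t\<^sup>2 * N) / (2 * \<mu>)"
      using incr[OF t] by linarith
    also have "\<dots> = t * ((D - I / \<mu>) + t * (E + N / (2 * \<mu>)))"
      using \<mu> by (simp add: field_simps power2_eq_square)
    finally show ?thesis
      using t by (simp add: zero_le_mult_iff)
  qed
  then have "0 \<le> D - I / \<mu>"
    by (rule nonneg_if_affine_nonneg_near_zero)
  then show ?thesis
    using \<mu> unfolding I_def by (simp add: field_simps)
qed

lemma is_prox_iff_inner_le:
  fixes g :: "'a::real_inner \<Rightarrow> real"
  assumes conv: "convex_on UNIV g" and \<mu>: "\<mu> > 0"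
  shows "is_prox g \<mu> x y \<longleftrightarrow> (\<forall>z. inner (x - y) (z - y) \<le> \<mu> * (g z - g y))"
proof
  assume prox: "is_prox g \<mu> x y"
  show "\<forall>z. inner (x - y) (z - y) \<le> \<mu> * (g z - g y)"
  proof
    fix z
    show "inner (x - y) (z - y) \<le> \<mu> * (g z - g y)"
    proof (rule is_prox_inner_le[OF \<mu> prox])
      fix t :: real assume "0 < t" "t \<le> 1"
      then show "g (y + t *\<^sub>R (z - y)) - g y \<le> t * (g z - g y) + t\<^sup>2 * 0"
        using convex_on_UNIV_segment_le[OF conv, of t y z] by simp
    qed
  qed
next
  assume vi: "\<forall>z. inner (x - y) (z - y) \<le> \<mu> * (g z - g y)"
  show "is_prox g \<mu> x y"
    unfolding is_prox_def
  proof
    fix z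
    have "(norm (x - z))\<^sup>2 = (norm (x - y))\<^sup>2 - 2 * inner (x - y) (z - y) + (norm (z - y))\<^sup>2"
      using norm_diff_segment_sq[of x y 1 z] by simp
    then have "(norm (x - z))\<^sup>2 / (2 * \<mu>) =
        (norm (x - y))\<^sup>2 / (2 * \<mu>) - inner (x - y) (z - y) / \<mu> + (norm (z - y))\<^sup>2 / (2 * \<mu>)"
      using \<mu> by (simp add: field_simps)
    moreover have "inner (x - y) (z - y) / \<mu> \<le> g z - g y"
      using vi \<mu> by (simp add: field_simps)
    moreover have "0 \<le> (norm (z - y))\<^sup>2 / (2 * \<mu>)"
      using \<mu> by simp
    ultimately show "prox_objective g \<mu> x y \<le> prox_objective g \<mu> x z"
      unfolding prox_objective_def by linarith
  qed
qed

lemma is_prox_prox: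
  fixes g :: "'a::{real_inner, complete_space} \<Rightarrow> real"
  assumes "convex_on UNIV g" and "lsc g" and "\<mu> > 0"
  shows "is_prox g \<mu> x (prox \<mu> g x)"
  using is_prox_exists[OF assms] prox_eqI[OF assms(1,3)] by metis

lemma prox_eq_iff_inner_le:
  fixes g :: "'a::{real_inner, complete_space} \<Rightarrow> real"
  assumes "convex_on UNIV g" and "lsc g" and "\<mu> > 0"
  shows "prox \<mu> g x = y \<longleftrightarrow> (\<forall>z. inner (x - y) (z - y) \<le> \<mu> * (g z - g y))"
  using is_prox_prox[OF assms] prox_eqI[OF assms(1,3)] is_prox_iff_inner_le[OF assms(1,3)]
  by metis

lemma prox_le:
  fixes g :: "'a::{real_inner, complete_space} \<Rightarrow> real"
  assumes "convex_on UNIV g" and "lsc g" and "0 \<le> \<mu>"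
  shows "g (prox \<mu> g x) \<le> g x"
proof (cases "\<mu> = 0")
  case False
  then have "is_prox g \<mu> x (prox \<mu> g x)"
    using assms by (intro is_prox_prox) auto
  then have "prox_objective g \<mu> x (prox \<mu> g x) \<le> prox_objective g \<mu> x x"
    unfolding is_prox_def by blast
  moreover have "0 \<le> (norm (x - prox \<mu> g x))\<^sup>2 / (2 * \<mu>)"
    using assms(3) by simp
  ultimately show ?thesis
    unfolding prox_objective_def by simp
qed (simp add: prox_def)

lemma is_prox_value_antimono:
  fixes g :: "'a::real_normed_vector \<Rightarrow> real"
  assumes "0 < \<mu>1" "\<mu>1 < \<mu>2" and "is_prox g \<mu>1 x y1" and "is_prox g \<mu>2 x y2"
  shows "g y2 \<le> g y1"
proof -
  define k1 where "k1 = 1 / (2 * \<mu>1)"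
  define k2 where "k2 = 1 / (2 * \<mu>2)"
  define N1 where "N1 = (norm (x - y1))\<^sup>2"
  define N2 where "N2 = (norm (x - y2))\<^sup>2"
  have k: "0 < k2" "k2 < k1"
    using assms(1,2) unfolding k1_def k2_def by (auto simp: field_simps)
  have 1: "g y1 + k1 * N1 \<le> g y2 + k1 * N2" and 2: "g y2 + k2 * N2 \<le> g y1 + k2 * N1"
    using assms(3,4) unfolding is_prox_def prox_objective_def k1_def k2_def N1_def N2_def by auto
  then have "(k1 - k2) * (N1 - N2) \<le> 0"
    by (simp add: algebra_simps)
  then have "k2 * (N1 - N2) \<le> 0"
    using k by (simp add: mult_le_0_iff)
  then show ?thesis
    using 2 by (simp add: algebra_simps)
qed

section \<open>Subgradients of finite convex lower semicontinuous functions\<close>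

lemma is_prox_subgradient:
  fixes g :: "'a::real_inner \<Rightarrow> real"
  assumes "convex_on UNIV g" and "\<mu> > 0" and "is_prox g \<mu> x y"
  shows "g y + inner ((1 / \<mu>) *\<^sub>R (x - y)) (z - y) \<le> g z"
proof -
  have "inner (x - y) (z - y) \<le> \<mu> * (g z - g y)"
    using assms is_prox_iff_inner_le by blast
  then have "inner (x - y) (z - y) / \<mu> \<le> g z - g y"
    using assms(2) by (simp add: pos_divide_le_eq mult.commute)
  then show ?thesis
    by simp
qed

text \<open>By Baire's theorem some sublevel set \<open>{g \<le> n}\<close> has interior; convexity moves the bound
  to a neighbourhood of any point.\<close>

lemma convex_lsc_locally_bounded_above:
  fixes g :: "'a::{real_inner, complete_space} \<Rightarrow> real"
  assumes conv: "convex_on UNIV g" and lsc: "lsc g"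
  shows "\<exists>\<rho>>0. \<exists>B. \<forall>h. norm h \<le> \<rho> \<longrightarrow> g (x + h) \<le> B"
proof -
  define \<G> where "\<G> = range (\<lambda>n::nat. {z. g z \<le> real n})"
  have "\<Union>\<G> = UNIV"
    unfolding \<G>_def using real_nat_ceiling_ge by blast
  moreover have "closedin euclidean T" if "T \<in> \<G>" for T
    using that lsc unfolding \<G>_def lsc_def by auto
  ultimately obtain T where T: "T \<in> \<G>" "interior T \<noteq> {}"
    using Baire_category_alt[of euclidean \<G>] completely_metrizable_space_euclidean
    unfolding \<G>_def by auto
  then obtain n :: nat where Tn: "T = {z. g z \<le> real n}"
    unfolding \<G>_def by blast
  obtain z0 r where r: "r > 0" "ball z0 r \<subseteq> T"
    using T(2) by (auto simp: mem_interior)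
  have "g (x + h) \<le> (1/2) * g (2 *\<^sub>R x - z0) + (1/2) * real n" if h: "norm h \<le> r/4" for h
  proof -
    have "x + h = (1 - 1/2) *\<^sub>R (2 *\<^sub>R x - z0) + (1/2) *\<^sub>R (z0 + 2 *\<^sub>R h)"
      by (simp add: algebra_simps)
    also have "g \<dots> \<le> (1 - 1/2) * g (2 *\<^sub>R x - z0) + (1/2) * g (z0 + 2 *\<^sub>R h)"
      using conv by (rule convex_onD) auto
    finally have "g (x + h) \<le> (1/2) * g (2 *\<^sub>R x - z0) + (1/2) * g (z0 + 2 *\<^sub>R h)"
      by simp
    moreover have "z0 + 2 *\<^sub>R h \<in> ball z0 r"
      using h r by (simp add: dist_norm)
    then have "g (z0 + 2 *\<^sub>R h) \<le> real n"
      using r Tn by auto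
    ultimately show ?thesis
      by linarith
  qed
  then show ?thesis
    using r(1) by (intro exI[of _ "r/4"]) auto
qed

lemma subgradient_norm_le:
  fixes g :: "'a::real_inner \<Rightarrow> real"
  assumes s: "s > 0" "\<And>z. g x - 1 - norm (z - x) / s \<le> g z"
    and \<rho>: "\<rho> > 0" "\<And>h. norm h \<le> \<rho> \<Longrightarrow> g (x + h) \<le> B"
    and \<mu>: "0 < \<mu>" "\<mu> \<le> 1"
    and sub: "\<And>z. g (x - \<mu> *\<^sub>R v) + inner v (z - (x - \<mu> *\<^sub>R v)) \<le> g z"
  shows "norm v \<le> (B - g x + 1 + 1 / (4 * s\<^sup>2)) / \<rho>"
proof -
  define n where "n = norm v"
  define h where "h = \<rho> *\<^sub>R sgn v"
  have "norm h \<le> \<rho>"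
    using \<rho>(1) by (simp add: h_def norm_sgn)
  moreover have "inner v h = \<rho> * n"
    by (cases "v = 0") (simp_all add: h_def n_def sgn_div_norm dot_square_norm power2_eq_square)
  moreover have "inner v (x + h - (x - \<mu> *\<^sub>R v)) = inner v h + \<mu> * n\<^sup>2"
    by (simp add: inner_add_right n_def power2_norm_eq_inner)
  ultimately have "g (x - \<mu> *\<^sub>R v) + \<rho> * n + \<mu> * n\<^sup>2 \<le> B"
    using sub[of "x + h"] \<rho>(2)[of h] by linarith
  moreover have "g x - 1 - \<mu> * n / s \<le> g (x - \<mu> *\<^sub>R v)"
    using s(2)[of "x - \<mu> *\<^sub>R v"] \<mu>(1) by (simp add: n_def)
  moreover have "\<mu> * (n / s - n\<^sup>2) \<le> 1 / (4 * s\<^sup>2)"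
  proof -
    have "1 / (4 * s\<^sup>2) - (n / s - n\<^sup>2) = (n - 1 / (2 * s))\<^sup>2"
      using s(1) by (simp add: field_simps power2_eq_square)
    then have "n / s - n\<^sup>2 \<le> 1 / (4 * s\<^sup>2)"
      using zero_le_power2[of "n - 1 / (2 * s)"] by linarith
    then have "\<mu> * (n / s - n\<^sup>2) \<le> \<mu> * (1 / (4 * s\<^sup>2))"
      using \<mu>(1) by (intro mult_left_mono) auto
    also have "\<dots> \<le> 1 / (4 * s\<^sup>2)"
      using \<mu> by (intro mult_left_le_one_le) auto
    finally show ?thesis .
  qed
  ultimately have "n * \<rho> \<le> B - g x + 1 + 1 / (4 * s\<^sup>2)"
    by (simp add: algebra_simps)
  then show ?thesis
    using \<rho>(1) by (simp add: n_def pos_le_divide_eq)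
qed

text \<open>Monotonicity of the subdifferential along the proximal path \<open>x - \<mu> v\<^sub>\<mu>\<close>.\<close>

lemma subgradient_increment_le:
  fixes g :: "'a::real_inner \<Rightarrow> real"
  assumes \<mu>: "0 < \<mu>2" "\<mu>2 < \<mu>1"
    and sub1: "\<And>z. g (x - \<mu>1 *\<^sub>R v1) + inner v1 (z - (x - \<mu>1 *\<^sub>R v1)) \<le> g z"
    and sub2: "\<And>z. g (x - \<mu>2 *\<^sub>R v2) + inner v2 (z - (x - \<mu>2 *\<^sub>R v2)) \<le> g z"
  shows "(norm (v1 - v2))\<^sup>2 \<le> (norm v2)\<^sup>2 - (norm v1)\<^sup>2"
proof -
  define a where "a = inner v1 v1"
  define b where "b = inner v2 v2"
  define c where "c = inner v1 v2"
  have "inner v1 (\<mu>1 *\<^sub>R v1 - \<mu>2 *\<^sub>R v2) + inner v2 (\<mu>2 *\<^sub>R v2 - \<mu>1 *\<^sub>R v1) \<le> 0"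
    using sub1[of "x - \<mu>2 *\<^sub>R v2"] sub2[of "x - \<mu>1 *\<^sub>R v1"] by (simp add: algebra_simps)
  then have "\<mu>1 * (a - c) \<le> \<mu>2 * (c - b)"
    unfolding a_def b_def c_def by (simp add: algebra_simps inner_commute)
  also have "\<dots> \<le> \<mu>2 * (a - c)"
  proof -
    have "0 \<le> a + b - 2 * c"
      using inner_ge_zero[of "v1 - v2"] unfolding a_def b_def c_def
      by (simp add: algebra_simps inner_commute)
    then show ?thesis
      using \<mu>(1) by (intro mult_left_mono) auto
  qed
  finally have "(\<mu>1 - \<mu>2) * (a - c) \<le> 0"
    by (simp add: algebra_simps)
  then have "a \<le> c"
    using \<mu> by (simp add: mult_le_0_iff)
  then show ?thesis
    unfolding power2_norm_eq_inner a_def c_def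
    by (simp add: algebra_simps inner_commute)
qed

lemma Cauchy_if_norm_sq_increments:
  fixes v :: "nat \<Rightarrow> 'a::real_inner"
  assumes bnd: "\<And>k. norm (v k) \<le> K"
    and incr: "\<And>k j. k \<le> j \<Longrightarrow> (norm (v k - v j))\<^sup>2 \<le> (norm (v j))\<^sup>2 - (norm (v k))\<^sup>2"
  shows "Cauchy v"
proof (rule CauchyI)
  fix e :: real assume e: "0 < e"
  define a where "a k = (norm (v k))\<^sup>2" for k
  have "a k \<le> a j" if "k \<le> j" for k j
    using incr[OF that] zero_le_power2[of "norm (v k - v j)"] unfolding a_def by linarith
  then have "incseq a"
    by (simp add: incseq_def)
  moreover have "Bseq a"
    using bnd unfolding a_def by (intro BseqI'[of _ "K\<^sup>2"]) (simp add: power_mono)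
  ultimately have "Cauchy a"
    by (simp add: Bseq_mono_convergent convergent_Cauchy incseq_def)
  then obtain M where M: "\<And>m n. m \<ge> M \<Longrightarrow> n \<ge> M \<Longrightarrow> norm (a m - a n) < e\<^sup>2"
    using e by (meson CauchyD zero_less_power)
  have "norm (v m - v n) < e" if "m \<ge> M" "n \<ge> M" "m \<le> n" for m n
  proof -
    have "(norm (v m - v n))\<^sup>2 < e\<^sup>2"
      using incr[OF that(3)] M[OF that(1,2)] unfolding a_def by simp
    then show ?thesis
      using e by (simp add: power_less_imp_less_base)
  qed
  then show "\<exists>M. \<forall>m\<ge>M. \<forall>n\<ge>M. norm (v m - v n) < e"
    by (metis nle_le norm_minus_commute)
qed

lemma subgradient_limit:
  fixes g :: "'a::real_inner \<Rightarrow> real"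
  assumes lsc: "lsc g" and P: "P \<longlonglongrightarrow> x" and v: "v \<longlonglongrightarrow> u"
    and sub: "\<And>k z. g (P k) + inner (v k) (z - P k) \<le> g z"
  shows "g x + inner u (z - x) \<le> g z"
proof (rule ccontr)
  assume "\<not> ?thesis"
  then obtain c where c: "g z - inner u (z - x) < c" "c < g x"
    using dense by (metis diff_less_eq not_le)
  have "open {y. c < g y}"
    using lsc unfolding lsc_iff_open_superlevel ..
  then have ev1: "\<forall>\<^sub>F k in sequentially. c < g (P k)"
    using P c(2) by (auto dest: topological_tendstoD)
  have "((\<lambda>k. g z - inner (v k) (z - P k)) \<longlongrightarrow> g z - inner u (z - x)) sequentially"
    by (intro tendsto_intros P v)
  then have ev2: "\<forall>\<^sub>F k in sequentially. g z - inner (v k) (z - P k) < c"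
    using c(1) by (rule order_tendstoD)
  obtain k where "c < g (P k)" "g z - inner (v k) (z - P k) < c"
    using eventually_happens[OF eventually_conj[OF ev1 ev2]] by auto
  then show False
    using sub[of k z] by linarith
qed

text \<open>The subgradient is the limit of the Yosida approximations \<open>(x - P\<^sub>\<mu> g x) / \<mu>\<close> as
  \<open>\<mu> \<rightarrow> 0\<close>.\<close>

lemma convex_lsc_has_subgradient:
  fixes g :: "'a::{real_inner, complete_space} \<Rightarrow> real"
  assumes conv: "convex_on UNIV g" and lsc: "lsc g"
  shows "\<exists>u. \<forall>z. g x + inner u (z - x) \<le> g z"
proof -
  obtain s where s: "s > 0" "\<And>z. g x - 1 - norm (z - x) / s \<le> g z"
    using convex_lsc_norm_minorant[OF conv lsc] by blast
  obtain \<rho> B where \<rho>: "\<rho> > 0" "\<And>h. norm h \<le> \<rho> \<Longrightarrow> g (x + h) \<le> B"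
    using convex_lsc_locally_bounded_above[OF conv lsc] by blast
  define \<mu> where "\<mu> k = inverse (real (Suc k))" for k
  define v where "v k = (1 / \<mu> k) *\<^sub>R (x - prox (\<mu> k) g x)" for k
  have \<mu>: "0 < \<mu> k" "\<mu> k \<le> 1" for k
    unfolding \<mu>_def by (auto simp: inverse_le_1_iff)
  have P: "prox (\<mu> k) g x = x - \<mu> k *\<^sub>R v k" for k
    using \<mu>(1)[of k] by (simp add: v_def)
  have sub: "g (x - \<mu> k *\<^sub>R v k) + inner (v k) (z - (x - \<mu> k *\<^sub>R v k)) \<le> g z" for k z
  proof -
    have "g (prox (\<mu> k) g x) + inner (v k) (z - prox (\<mu> k) g x) \<le> g z"
      unfolding v_def by (rule is_prox_subgradient[OF conv \<mu>(1) is_prox_prox[OF conv lsc \<mu>(1)]])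
    then show ?thesis
      unfolding P .
  qed
  have "Cauchy v"
  proof (rule Cauchy_if_norm_sq_increments)
    show "norm (v k) \<le> (B - g x + 1 + 1 / (4 * s\<^sup>2)) / \<rho>" for k
      using s \<rho> \<mu> sub by (rule subgradient_norm_le)
    show "(norm (v k - v j))\<^sup>2 \<le> (norm (v j))\<^sup>2 - (norm (v k))\<^sup>2" if "k \<le> j" for k j
    proof (cases "k = j")
      case False
      then have "\<mu> j < \<mu> k"
        using that unfolding \<mu>_def by (simp add: less_imp_inverse_less)
      then show ?thesis
        using \<mu>(1) sub by (intro subgradient_increment_le) auto
    qed simp
  qed
  then obtain u where u: "v \<longlonglongrightarrow> u"
    by (auto simp: Cauchy_convergent_iff convergent_def)
  have "\<mu> \<longlonglongrightarrow> 0"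
    unfolding \<mu>_def by (rule LIMSEQ_inverse_real_of_nat)
  then have "(\<lambda>k. x - \<mu> k *\<^sub>R v k) \<longlonglongrightarrow> x - 0 *\<^sub>R u"
    by (intro tendsto_intros u)
  then show ?thesis
    using subgradient_limit[OF lsc _ u sub] by auto
qed

section \<open>The operator \<open>B\<^sub>i\<close>\<close>

lemma fconj_phi: "fconj phi s = (if 0 \<le> s then 0 else \<infinity>)"
proof (cases "0 \<le> s")
  case True
  have "(SUP y. ereal (s * y) - phi y) = 0"
  proof (rule antisym)
    show "(SUP y. ereal (s * y) - phi y) \<le> 0"
    proof (rule SUP_least)
      fix y :: real
      show "ereal (s * y) - phi y \<le> 0"
        using True mult_nonneg_nonpos[of s y] by (cases "y \<le> 0") (auto simp: phi_def indic_def)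
    qed
    show "0 \<le> (SUP y. ereal (s * y) - phi y)"
      by (rule SUP_upper2[of 0]) (auto simp: phi_def indic_def)
  qed
  then show ?thesis
    using True by (simp add: fconj_def)
next
  case False
  have "(SUP y. ereal (s * y) - phi y) = \<infinity>"
  proof (rule SUP_PInfty)
    fix n :: nat
    have "s * (real n / s) = real n" and "real n / s \<le> 0"
      using False by (auto simp: divide_nonneg_neg)
    then show "\<exists>y\<in>UNIV. ereal (real n) \<le> ereal (s * y) - phi y"
      by (intro bexI[of _ "real n / s"]) (auto simp: phi_def indic_def)
  qed
  then show ?thesis
    using False by (simp add: fconj_def)
qed

lemma subdiff_fconj_phi_iff: "t \<in> subdiff (fconj phi) s \<longleftrightarrow> 0 \<le> s \<and> t \<le> 0 \<and> s * t = 0"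
proof
  assume t: "t \<in> subdiff (fconj phi) s"
  then have s: "0 \<le> s"
    unfolding subdiff_def fconj_phi by (auto split: if_splits)
  have le: "t * (y - s) \<le> 0" if "0 \<le> y" for y
    using t that s unfolding subdiff_def by (auto simp: fconj_phi dest!: spec[of _ y])
  from le[of "s + 1"] le[of 0] s have "t \<le> 0" "0 \<le> s * t"
    by (auto simp: algebra_simps)
  moreover have "s * t \<le> 0"
    using s \<open>t \<le> 0\<close> by (simp add: mult_nonneg_nonpos)
  ultimately show "0 \<le> s \<and> t \<le> 0 \<and> s * t = 0"
    using s by simp
next
  assume st: "0 \<le> s \<and> t \<le> 0 \<and> s * t = 0"
  have "t * (y - s) \<le> 0" if "0 \<le> y" for y
    using st that mult_nonpos_nonneg[of t y] by (auto simp: right_diff_distrib)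
  then show "t \<in> subdiff (fconj phi) s"
    using st unfolding subdiff_def by (auto simp: fconj_phi)
qed

lemma subdiff_ereal_iff: "u \<in> subdiff (\<lambda>y. ereal (g y)) x \<longleftrightarrow> (\<forall>y. g x + inner u (y - x) \<le> g y)"
  unfolding subdiff_def by simp

lemma mem_B_op_iff:
  "(a, b) \<in> B_op f i (x, p) \<longleftrightarrow> (\<exists>u t. (\<forall>y. f i x + inner u (y - x) \<le> f i y) \<and>
     0 \<le> p$i \<and> t \<le> 0 \<and> p$i * t = 0 \<and> a = p$i *\<^sub>R u \<and> b = (t - f i x) *\<^sub>R axis i 1)"
  unfolding B_op_def subdiff_ereal_iff subdiff_fconj_phi_iff by (auto simp: scaleR_diff_left)

lemma monotone_op_B_op:
  fixes f :: "'n::finite \<Rightarrow> 'a::real_inner \<Rightarrow> real"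
  shows "monotone_op (B_op f i)"
  unfolding monotone_op_def
proof (intro allI impI)
  fix z1 z2 :: "'a \<times> (real^'n)" and w1 w2
  assume w1: "w1 \<in> B_op f i z1" and w2: "w2 \<in> B_op f i z2"
  obtain x p y q where z: "z1 = (x, p)" "z2 = (y, q)"
    by (cases z1, cases z2)
  obtain u t where u: "\<forall>z. f i x + inner u (z - x) \<le> f i z" "0 \<le> p$i" "t \<le> 0" "p$i * t = 0"
    "w1 = (p$i *\<^sub>R u, (t - f i x) *\<^sub>R axis i 1)"
    using w1 unfolding z by (cases w1) (auto simp: mem_B_op_iff)
  obtain v r where v: "\<forall>z. f i y + inner v (z - y) \<le> f i z" "0 \<le> q$i" "r \<le> 0" "q$i * r = 0"
    "w2 = (q$i *\<^sub>R v, (r - f i y) *\<^sub>R axis i 1)"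
    using w2 unfolding z by (cases w2) (auto simp: mem_B_op_iff)
  have "inner (z1 - z2) (w1 - w2) =
      inner (x - y) (p$i *\<^sub>R u - q$i *\<^sub>R v) + inner (p - q) (((t - f i x) - (r - f i y)) *\<^sub>R axis i 1)"
    using u(5) v(5) unfolding z by (simp add: scaleR_diff_left)
  also have "\<dots> = p$i * inner (x - y) u - q$i * inner (x - y) v + ((t - f i x) - (r - f i y)) * (p$i - q$i)"
    by (simp add: inner_diff_right inner_axis)
  also have "\<dots> = (p$i * inner (x - y) u - p$i * (f i x - f i y)) - (q$i * inner (x - y) v - q$i * (f i x - f i y))
      + p$i * t + q$i * r - p$i * r - q$i * t"
    by (simp add: algebra_simps)
  finally have eq: "inner (z1 - z2) (w1 - w2) = \<dots>" .
  have "p$i * (f i x - f i y) \<le> p$i * inner (x - y) u"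
    using u(1)[rule_format, of y] u(2) by (intro mult_left_mono) (auto simp: inner_diff inner_commute)
  moreover have "q$i * inner (x - y) v \<le> q$i * (f i x - f i y)"
    using v(1)[rule_format, of x] v(2) by (intro mult_left_mono) (auto simp: inner_diff inner_commute)
  moreover have "p$i * r \<le> 0" "q$i * t \<le> 0"
    using u(2,3) v(2,3) by (auto simp: mult_nonneg_nonpos)
  ultimately show "0 \<le> inner (z1 - z2) (w1 - w2)"
    unfolding eq using u(4) v(4) by linarith
qed

lemma max_monotoneI_resolvent:
  fixes A :: "'a::real_inner \<Rightarrow> 'a set"
  assumes mono: "monotone_op A" and surj: "\<And>z. resolvent A z \<noteq> {}"
  shows "max_monotone A"
  unfolding max_monotone_def
proof (intro conjI allI impI mono)
  fix A' assume A': "monotone_op A' \<and> (\<forall>x. A x \<subseteq> A' x)"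
  have "v \<in> A z" if v: "v \<in> A' z" for z v
  proof -
    obtain y b where b: "b \<in> A y" "z + v = y + b"
      using surj[of "z + v"] unfolding resolvent_def by auto
    then have "0 \<le> inner (z - y) (v - b)"
      using A' v unfolding monotone_op_def by blast
    moreover have "v - b = y - z"
      using b(2) by (simp add: algebra_simps)
    ultimately have "inner (z - y) (z - y) \<le> 0"
      by (metis inner_minus_right minus_diff_eq neg_0_le_iff_le)
    then have "inner (z - y) (z - y) = 0"
      using inner_ge_zero[of "z - y"] by linarith
    then have "z = y"
      by simp
    then show ?thesis
      using b by simp
  qed
  then show "A' = A"
    using A' by blast
qed

lemma scale_op_1 [simp]: "scale_op 1 A = A"
  by (simp add: scale_op_def fun_eq_iff)

lemma mem_resolvent_scale_op_iff:
  "(y, q) \<in> resolvent (scale_op \<gamma> A) (x, p) \<longleftrightarrow>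
    (\<exists>a b. (a, b) \<in> A (y, q) \<and> x = y + \<gamma> *\<^sub>R a \<and> p = q + \<gamma> *\<^sub>R b)"
  unfolding resolvent_def scale_op_def image_image image_iff Bex_def by auto

lemma mem_resolvent_B_op_iff_subgradient:
  "(y, q) \<in> resolvent (scale_op \<gamma> (B_op f i)) (x, p) \<longleftrightarrow>
    (\<exists>u t. (\<forall>z. f i y + inner u (z - y) \<le> f i z) \<and> 0 \<le> q$i \<and> t \<le> 0 \<and> q$i * t = 0 \<and>
       x = y + (\<gamma> * q$i) *\<^sub>R u \<and> p = q + (\<gamma> * (t - f i y)) *\<^sub>R axis i 1)"
  unfolding mem_resolvent_scale_op_iff mem_B_op_iff
proof (intro iffI; elim exE conjE)
  fix a b u t
  assume "\<forall>z. f i y + inner u (z - y) \<le> f i z" "0 \<le> q$i" "t \<le> 0" "q$i * t = 0"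
    "a = q$i *\<^sub>R u" "b = (t - f i y) *\<^sub>R axis i 1" "x = y + \<gamma> *\<^sub>R a" "p = q + \<gamma> *\<^sub>R b"
  then show "\<exists>u t. (\<forall>z. f i y + inner u (z - y) \<le> f i z) \<and> 0 \<le> q$i \<and> t \<le> 0 \<and> q$i * t = 0 \<and>
      x = y + (\<gamma> * q$i) *\<^sub>R u \<and> p = q + (\<gamma> * (t - f i y)) *\<^sub>R axis i 1"
    by (intro exI[of _ u] exI[of _ t]) simp
next
  fix u t
  assume "\<forall>z. f i y + inner u (z - y) \<le> f i z" "0 \<le> q$i" "t \<le> 0" "q$i * t = 0"
    "x = y + (\<gamma> * q$i) *\<^sub>R u" "p = q + (\<gamma> * (t - f i y)) *\<^sub>R axis i 1"
  then show "\<exists>a b. (\<exists>u t. (\<forall>z. f i y + inner u (z - y) \<le> f i z) \<and> 0 \<le> q$i \<and> t \<le> 0 \<and>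
      q$i * t = 0 \<and> a = q$i *\<^sub>R u \<and> b = (t - f i y) *\<^sub>R axis i 1) \<and>
      x = y + \<gamma> *\<^sub>R a \<and> p = q + \<gamma> *\<^sub>R b"
    by (intro exI[of _ "q$i *\<^sub>R u"] exI[of _ "(t - f i y) *\<^sub>R axis i 1"] conjI exI[of _ u] exI[of _ t]) auto
qed

lemma eq_add_axis_iff:
  fixes p q :: "real^'n"
  shows "p = q + c *\<^sub>R axis i 1 \<longleftrightarrow> p$i = q$i + c \<and> (\<forall>j. j \<noteq> i \<longrightarrow> p$j = q$j)"
  by (auto simp: vec_eq_iff axis_def)

section \<open>The multiplier equation\<close>

lemma convex_on_mono_comp:
  fixes h :: "real \<Rightarrow> real"
  assumes "convex_on UNIV h" and "mono h" and "convex_on S F"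
  shows "convex_on S (\<lambda>z. h (F z))"
proof (rule convex_onI)
  fix t :: real and a b assume t: "0 < t" "t < 1" and ab: "a \<in> S" "b \<in> S"
  have "h (F ((1 - t) *\<^sub>R a + t *\<^sub>R b)) \<le> h ((1 - t) * F a + t * F b)"
    using assms(3) t ab by (intro monoD[OF assms(2)] convex_onD) auto
  also have "\<dots> \<le> (1 - t) * h (F a) + t * h (F b)"
    using assms(1) t by (intro convex_onD[of UNIV h, simplified]) auto
  finally show "h (F ((1 - t) *\<^sub>R a + t *\<^sub>R b)) \<le> (1 - t) * h (F a) + t * h (F b)" .
qed (use assms(3) convex_on_imp_convex in blast)

lemma convex_power2_pos_part: "convex_on UNIV (\<lambda>s::real. (max s 0)\<^sup>2)"
proof (rule convex_onI)
  fix t a b :: real assume t: "0 < t" "t < 1"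
  have "(1 - t) * a \<le> (1 - t) * max a 0" and "t * b \<le> t * max b 0"
    using t by (intro mult_left_mono; simp)+
  moreover have "0 \<le> (1 - t) * max a 0 + t * max b 0"
    using t by simp
  ultimately have "max ((1 - t) *\<^sub>R a + t *\<^sub>R b) 0 \<le> (1 - t) * max a 0 + t * max b 0"
    by simp
  then have "(max ((1 - t) *\<^sub>R a + t *\<^sub>R b) 0)\<^sup>2 \<le> ((1 - t) * max a 0 + t * max b 0)\<^sup>2"
    by (intro power_mono) auto
  also have "\<dots> \<le> (1 - t) * (max a 0)\<^sup>2 + t * (max b 0)\<^sup>2"
    using convex_onD[OF convex_power2, of t "max a 0" "max b 0"] t by simp
  finally show "(max ((1 - t) *\<^sub>R a + t *\<^sub>R b) 0)\<^sup>2 \<le> (1 - t) * (max a 0)\<^sup>2 + t * (max b 0)\<^sup>2" .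
qed auto

lemma mono_power2_pos_part: "mono (\<lambda>s::real. (max s 0)\<^sup>2)"
  by (rule monoI) (auto intro: power_mono)

lemma power2_pos_part_add_le:
  fixes a h :: real
  shows "(max (a + h) 0)\<^sup>2 \<le> (max a 0)\<^sup>2 + 2 * max a 0 * h + h\<^sup>2"
proof (cases "0 \<le> a")
  case True
  have "(max (a + h) 0)\<^sup>2 \<le> (a + h)\<^sup>2"
    by (cases "0 \<le> a + h") (auto simp: max_def)
  then show ?thesis
    using True by (simp add: power2_eq_square algebra_simps)
next
  case False
  have "(max (a + h) 0)\<^sup>2 \<le> (max h 0)\<^sup>2"
    using False by (intro power_mono) auto
  also have "\<dots> \<le> h\<^sup>2"
    by (cases "0 \<le> h") (auto simp: max_def)
  finally show ?thesis
    using False by simp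
qed

lemma power2_pos_part_le_iff:
  fixes s K :: real
  assumes "0 \<le> K"
  shows "(max s 0)\<^sup>2 \<le> K \<longleftrightarrow> s \<le> sqrt K"
proof -
  have "(max s 0)\<^sup>2 \<le> K \<longleftrightarrow> sqrt ((max s 0)\<^sup>2) \<le> sqrt K"
    by (rule real_sqrt_le_iff[symmetric])
  also have "sqrt ((max s 0)\<^sup>2) = max s 0"
    by simp
  finally show ?thesis
    using assms by auto
qed

text \<open>A proximal point \<open>y\<close> of \<open>quad_penalty F c \<gamma>\<close> solves the multiplier equation with
  \<open>w = (c + \<gamma> F y)\<^sub>+\<close>.\<close>

definition quad_penalty :: "('a \<Rightarrow> real) \<Rightarrow> real \<Rightarrow> real \<Rightarrow> 'a \<Rightarrow> real" where
  "quad_penalty F c \<gamma> z = (max (c + \<gamma> * F z) 0)\<^sup>2 / (2 * \<gamma>)"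

lemma convex_quad_penalty:
  fixes F :: "'a::real_vector \<Rightarrow> real"
  assumes "convex_on UNIV F" and "\<gamma> > 0"
  shows "convex_on UNIV (quad_penalty F c \<gamma>)"
proof -
  have "convex_on UNIV (\<lambda>z. c + \<gamma> * F z)"
    using assms by (intro convex_on_add convex_on_cmul) (auto simp: convex_on_const)
  then have "convex_on UNIV (\<lambda>z. (max (c + \<gamma> * F z) 0)\<^sup>2)"
    by (rule convex_on_mono_comp[OF convex_power2_pos_part mono_power2_pos_part])
  then show ?thesis
    unfolding quad_penalty_def using assms(2) by (intro convex_on_cdiv) auto
qed

lemma lsc_quad_penalty:
  assumes "lsc F" and "\<gamma> > 0"
  shows "lsc (quad_penalty F c \<gamma>)"
  unfolding lsc_def
proof
  fix C :: real
  show "closed {z. quad_penalty F c \<gamma> z \<le> C}"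
  proof (cases "C < 0")
    case True
    then have "{z. quad_penalty F c \<gamma> z \<le> C} = {}"
      using assms(2) by (auto simp: quad_penalty_def not_le intro: less_le_trans)
    then show ?thesis
      by simp
  next
    case False
    have "quad_penalty F c \<gamma> z \<le> C \<longleftrightarrow> F z \<le> (sqrt (2 * \<gamma> * C) - c) / \<gamma>" for z
    proof -
      have "quad_penalty F c \<gamma> z \<le> C \<longleftrightarrow> (max (c + \<gamma> * F z) 0)\<^sup>2 \<le> 2 * \<gamma> * C"
        unfolding quad_penalty_def using assms(2) by (simp add: divide_le_eq mult.commute mult.left_commute)
      also have "\<dots> \<longleftrightarrow> c + \<gamma> * F z \<le> sqrt (2 * \<gamma> * C)"
        using False assms(2) by (intro power2_pos_part_le_iff) simp
      also have "\<dots> \<longleftrightarrow> F z \<le> (sqrt (2 * \<gamma> * C) - c) / \<gamma>"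
        using assms(2) by (simp add: field_simps)
      finally show ?thesis .
    qed
    then show ?thesis
      using assms(1) unfolding lsc_def by simp
  qed
qed

lemma is_prox_quad_penalty_inner_le:
  fixes F :: "'a::real_inner \<Rightarrow> real"
  assumes conv: "convex_on UNIV F" and \<gamma>: "\<gamma> > 0"
    and prox: "is_prox (quad_penalty F c \<gamma>) \<gamma> x y"
  shows "inner (x - y) (z - y) \<le> \<gamma> * (max (c + \<gamma> * F y) 0 * (F z - F y))"
proof (rule is_prox_inner_le[OF \<gamma> prox])
  fix t :: real assume t: "0 < t" "t \<le> 1"
  define w where "w = max (c + \<gamma> * F y) 0"
  define d where "d = \<gamma> * (F z - F y)"
  have "\<gamma> * F (y + t *\<^sub>R (z - y)) \<le> \<gamma> * (F y + t * (F z - F y))"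
    using convex_on_UNIV_segment_le[OF conv, of t y z] t \<gamma> by (intro mult_left_mono) auto
  then have "c + \<gamma> * F (y + t *\<^sub>R (z - y)) \<le> (c + \<gamma> * F y) + t * d"
    unfolding d_def by (simp add: algebra_simps)
  then have "(max (c + \<gamma> * F (y + t *\<^sub>R (z - y))) 0)\<^sup>2 \<le> (max ((c + \<gamma> * F y) + t * d) 0)\<^sup>2"
    by (rule monoD[OF mono_power2_pos_part])
  also have "\<dots> \<le> w\<^sup>2 + 2 * w * (t * d) + (t * d)\<^sup>2"
    unfolding w_def by (rule power2_pos_part_add_le)
  finally have "quad_penalty F c \<gamma> (y + t *\<^sub>R (z - y)) \<le> (w\<^sup>2 + 2 * w * (t * d) + (t * d)\<^sup>2) / (2 * \<gamma>)"
    unfolding quad_penalty_def using \<gamma> by (intro divide_right_mono) auto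
  moreover have "quad_penalty F c \<gamma> y = w\<^sup>2 / (2 * \<gamma>)"
    unfolding quad_penalty_def w_def ..
  ultimately have "quad_penalty F c \<gamma> (y + t *\<^sub>R (z - y)) - quad_penalty F c \<gamma> y
      \<le> (2 * w * (t * d) + (t * d)\<^sup>2) / (2 * \<gamma>)"
    by (simp add: add_divide_distrib diff_divide_distrib)
  also have "\<dots> = t * (w * (F z - F y)) + t\<^sup>2 * (d\<^sup>2 / (2 * \<gamma>))"
    unfolding d_def using \<gamma> by (simp add: field_simps power2_eq_square)
  finally show "quad_penalty F c \<gamma> (y + t *\<^sub>R (z - y)) - quad_penalty F c \<gamma> y
      \<le> t * (max (c + \<gamma> * F y) 0 * (F z - F y)) + t\<^sup>2 * (d\<^sup>2 / (2 * \<gamma>))"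
    unfolding w_def .
qed

text \<open>\<open>is_omega F c \<gamma> x w\<close> says that \<open>w\<close> is the number \<open>\<omega>\<close>-bar of the statement, for
  \<open>F = f\<^sub>i\<close> and \<open>c = p\<^sub>i\<close>.\<close>

definition is_omega :: "('a::real_normed_vector \<Rightarrow> real) \<Rightarrow> real \<Rightarrow> real \<Rightarrow> 'a \<Rightarrow> real \<Rightarrow> bool" where
  "is_omega F c \<gamma> x w \<longleftrightarrow> 0 \<le> w \<and> (c + \<gamma> * F x \<le> 0 \<longrightarrow> w = 0) \<and>
     (c + \<gamma> * F x > 0 \<longrightarrow> w = c + \<gamma> * F (prox (\<gamma> * w) F x))"

lemma is_omega_pos:
  assumes "c + \<gamma> * F x > 0" and "is_omega F c \<gamma> x w"
  shows "w > 0"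
  using assms unfolding is_omega_def by (cases "w = 0") (auto simp: prox_def)

lemma is_omega_unique:
  fixes F :: "'a::{real_inner, complete_space} \<Rightarrow> real"
  assumes conv: "convex_on UNIV F" and lsc: "lsc F" and \<gamma>: "\<gamma> > 0"
    and w1: "is_omega F c \<gamma> x w1" and w2: "is_omega F c \<gamma> x w2"
  shows "w1 = w2"
proof (cases "c + \<gamma> * F x > 0")
  case True
  text \<open>A larger \<open>w\<close> gives a larger prox parameter, hence a smaller value \<open>c + \<gamma> F(prox)\<close>.\<close>
  have False if "w < w'" "is_omega F c \<gamma> x w" "is_omega F c \<gamma> x w'" for w w'
  proof -
    have \<mu>: "0 < \<gamma> * w" "\<gamma> * w < \<gamma> * w'"
      using that(1) is_omega_pos[OF True that(2)] \<gamma> by auto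
    then have "F (prox (\<gamma> * w') F x) \<le> F (prox (\<gamma> * w) F x)"
      using is_prox_value_antimono[OF \<mu> is_prox_prox[OF conv lsc] is_prox_prox[OF conv lsc]] by simp
    then have "\<gamma> * F (prox (\<gamma> * w') F x) \<le> \<gamma> * F (prox (\<gamma> * w) F x)"
      using \<gamma> by simp
    then show False
      using that True unfolding is_omega_def by linarith
  qed
  then show ?thesis
    using w1 w2 by (metis linorder_neqE_linordered_idom)
next
  case False
  then show ?thesis
    using w1 w2 unfolding is_omega_def by simp
qed

lemma is_omega_exists:
  fixes F :: "'a::{real_inner, complete_space} \<Rightarrow> real"
  assumes conv: "convex_on UNIV F" and lsc: "lsc F" and \<gamma>: "\<gamma> > 0"
  shows "\<exists>w. is_omega F c \<gamma> x w"
proof (cases "c + \<gamma> * F x > 0")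
  case True
  obtain y where y: "is_prox (quad_penalty F c \<gamma>) \<gamma> x y"
    using is_prox_exists[OF convex_quad_penalty[OF conv \<gamma>] lsc_quad_penalty[OF lsc \<gamma>] \<gamma>] by blast
  define w where "w = max (c + \<gamma> * F y) 0"
  have vi: "inner (x - y) (z - y) \<le> (\<gamma> * w) * (F z - F y)" for z
    using is_prox_quad_penalty_inner_le[OF conv \<gamma> y] unfolding w_def by (simp add: mult.assoc)
  have "w \<noteq> 0"
  proof
    assume "w = 0"
    then have "inner (x - y) (x - y) \<le> 0"
      using vi[of x] by simp
    then have "inner (x - y) (x - y) = 0"
      using inner_ge_zero[of "x - y"] by linarith
    then have "y = x"
      by simp
    then show False
      using True \<open>w = 0\<close> unfolding w_def by simp
  qed
  then have w: "0 < w" "w = c + \<gamma> * F y"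
    unfolding w_def by (auto simp: max_def split: if_splits)
  then have "prox (\<gamma> * w) F x = y"
    using vi \<gamma> by (subst prox_eq_iff_inner_le[OF conv lsc]) auto
  then have "is_omega F c \<gamma> x w"
    using w True unfolding is_omega_def by simp
  then show ?thesis ..
next
  case False
  then show ?thesis
    unfolding is_omega_def by (intro exI[of _ 0]) simp
qed

section \<open>The resolvent of \<open>\<gamma> B\<^sub>i\<close>\<close>

lemma mem_resolvent_B_op_D:
  fixes f :: "'n::finite \<Rightarrow> 'a::{real_inner, complete_space} \<Rightarrow> real"
  assumes conv: "convex_on UNIV (f i)" and lsc: "lsc (f i)" and \<gamma>: "\<gamma> > 0"
    and res: "(y, q) \<in> resolvent (scale_op \<gamma> (B_op f i)) (x, p)"
  shows "is_omega (f i) (p$i) \<gamma> x (q$i) \<and> (\<forall>j. j \<noteq> i \<longrightarrow> q$j = p$j) \<and>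
    y = (if p$i + \<gamma> * f i x \<le> 0 then x else prox (\<gamma> * q$i) (f i) x)"
proof -
  obtain u t where u: "\<forall>z. f i y + inner u (z - y) \<le> f i z"
    and t: "0 \<le> q$i" "t \<le> 0" "q$i * t = 0"
    and x: "x = y + (\<gamma> * q$i) *\<^sub>R u" and p: "p = q + (\<gamma> * (t - f i y)) *\<^sub>R axis i 1"
    using res unfolding mem_resolvent_B_op_iff_subgradient by blast
  have pi: "p$i = q$i + \<gamma> * (t - f i y)" and pj: "\<forall>j. j \<noteq> i \<longrightarrow> q$j = p$j"
    using p unfolding eq_add_axis_iff by auto
  show ?thesis
  proof (cases "q$i = 0")
    case True
    then have "y = x"
      using x by simp
    moreover have "p$i + \<gamma> * f i x \<le> 0"
      using pi True \<open>y = x\<close> \<gamma> t(2) by (simp add: algebra_simps mult_nonneg_nonpos)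
    ultimately show ?thesis
      using pj True unfolding is_omega_def by simp
  next
    case False
    then have qi: "0 < q$i" "q$i = p$i + \<gamma> * f i y"
      using t pi by auto
    have "inner (x - y) (z - y) \<le> (\<gamma> * q$i) * (f i z - f i y)" for z
    proof -
      have "inner (x - y) (z - y) = (\<gamma> * q$i) * inner u (z - y)"
        using x by simp
      also have "\<dots> \<le> (\<gamma> * q$i) * (f i z - f i y)"
        using u[rule_format, of z] qi(1) \<gamma> by (intro mult_left_mono) auto
      finally show ?thesis .
    qed
    then have y: "prox (\<gamma> * q$i) (f i) x = y"
      using \<gamma> qi by (subst prox_eq_iff_inner_le[OF conv lsc]) auto
    have "f i y \<le> f i x"
      using prox_le[OF conv lsc, of "\<gamma> * q$i" x] \<gamma> qi unfolding y by simp
    then have "\<gamma> * f i y \<le> \<gamma> * f i x"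
      using \<gamma> by simp
    then have "0 < p$i + \<gamma> * f i x"
      using qi by linarith
    then show ?thesis
      using pj qi y unfolding is_omega_def by auto
  qed
qed

lemma mem_resolvent_B_op_I:
  fixes f :: "'n::finite \<Rightarrow> 'a::{real_inner, complete_space} \<Rightarrow> real"
  assumes conv: "convex_on UNIV (f i)" and lsc: "lsc (f i)" and \<gamma>: "\<gamma> > 0"
    and w: "is_omega (f i) (p$i) \<gamma> x (q$i)" and pj: "\<forall>j. j \<noteq> i \<longrightarrow> q$j = p$j"
    and y: "y = (if p$i + \<gamma> * f i x \<le> 0 then x else prox (\<gamma> * q$i) (f i) x)"
  shows "(y, q) \<in> resolvent (scale_op \<gamma> (B_op f i)) (x, p)"
proof (cases "p$i + \<gamma> * f i x \<le> 0")
  case True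
  text \<open>The multiplier vanishes and \<open>t \<in> \<partial>\<phi>\<^sup>*(0)\<close> absorbs the negative value \<open>p\<^sub>i + \<gamma> f\<^sub>i(x)\<close>.\<close>
  define t where "t = (p$i + \<gamma> * f i x) / \<gamma>"
  have qi: "q$i = 0" and "y = x"
    using w y True unfolding is_omega_def by auto
  obtain u where u: "\<forall>z. f i x + inner u (z - x) \<le> f i z"
    using convex_lsc_has_subgradient[OF conv lsc] by blast
  have "t \<le> 0"
    using True \<gamma> by (simp add: t_def divide_nonpos_pos)
  moreover have "p = q + (\<gamma> * (t - f i y)) *\<^sub>R axis i 1"
    using pj qi \<open>y = x\<close> \<gamma> unfolding eq_add_axis_iff by (simp add: t_def field_simps)
  ultimately show ?thesis
    unfolding mem_resolvent_B_op_iff_subgradient using u qi \<open>y = x\<close> by auto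
next
  case False
  have qi: "0 < q$i" "q$i = p$i + \<gamma> * f i y" and y: "y = prox (\<gamma> * q$i) (f i) x"
    using is_omega_pos[OF _ w] w y False unfolding is_omega_def by auto
  define u where "u = (1 / (\<gamma> * q$i)) *\<^sub>R (x - y)"
  have "\<forall>z. f i y + inner u (z - y) \<le> f i z"
    using is_prox_subgradient[OF conv _ is_prox_prox[OF conv lsc]] \<gamma> qi(1) unfolding u_def y by simp
  moreover have "x = y + (\<gamma> * q$i) *\<^sub>R u"
    using \<gamma> qi(1) by (simp add: u_def)
  moreover have "p = q + (\<gamma> * (0 - f i y)) *\<^sub>R axis i 1"
    using pj qi(2) unfolding eq_add_axis_iff by simp
  ultimately show ?thesis
    unfolding mem_resolvent_B_op_iff_subgradient using qi(1) by (intro exI[of _ u] exI[of _ 0]) simp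
qed

lemma resolvent_B_op:
  fixes f :: "'n::finite \<Rightarrow> 'a::{real_inner, complete_space} \<Rightarrow> real"
  assumes conv: "convex_on UNIV (f i)" and lsc: "lsc (f i)" and \<gamma>: "\<gamma> > 0"
    and w: "is_omega (f i) (p$i) \<gamma> x w"
  shows "resolvent (scale_op \<gamma> (B_op f i)) (x, p) =
    {(if p$i + \<gamma> * f i x \<le> 0 then x else prox (\<gamma> * w) (f i) x, \<chi> j. if j = i then w else p$j)}"
    (is "_ = {(?y, ?q)}")
proof -
  have key: "(y, q) \<in> resolvent (scale_op \<gamma> (B_op f i)) (x, p) \<longleftrightarrow> y = ?y \<and> q = ?q" for y q
  proof
    assume "(y, q) \<in> resolvent (scale_op \<gamma> (B_op f i)) (x, p)"
    then have q: "is_omega (f i) (p$i) \<gamma> x (q$i)" "\<forall>j. j \<noteq> i \<longrightarrow> q$j = p$j"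
      and y: "y = (if p$i + \<gamma> * f i x \<le> 0 then x else prox (\<gamma> * q$i) (f i) x)"
      using mem_resolvent_B_op_D[where f=f and i=i, OF conv lsc \<gamma>] by blast+
    have "q$i = w"
      using is_omega_unique[OF conv lsc \<gamma> q(1) w] .
    then have "q = ?q"
      using q(2) by (simp add: vec_eq_iff)
    then show "y = ?y \<and> q = ?q"
      using y \<open>q$i = w\<close> by simp
  next
    assume yq: "y = ?y \<and> q = ?q"
    then have "q$i = w" "\<forall>j. j \<noteq> i \<longrightarrow> q$j = p$j"
      by simp_all
    then show "(y, q) \<in> resolvent (scale_op \<gamma> (B_op f i)) (x, p)"
      using w yq by (intro mem_resolvent_B_op_I[where f=f and i=i, OF conv lsc \<gamma>]) simp_all
  qed
  show ?thesis
  proof (intro set_eqI)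
    fix z :: "'a \<times> (real^'n)"
    obtain y q where "z = (y, q)"
      by (cases z)
    then show "z \<in> resolvent (scale_op \<gamma> (B_op f i)) (x, p) \<longleftrightarrow> z \<in> {(?y, ?q)}"
      using key by simp
  qed
qed

theorem proposition3p3:
  fixes f :: "'n::finite \<Rightarrow> 'a::{real_inner, complete_space} \<Rightarrow> real"
    and i :: 'n
  assumes conv: "convex_on UNIV (f i)"
    and lsc: "lsc (f i)"
  shows "max_monotone (B_op f i) \<and>
    (\<forall>x p \<gamma>. \<gamma> > 0 \<longrightarrow>
      (let cond = (\<lambda>w::real. 0 \<le> w \<and>
                     (p $ i + \<gamma> * f i x \<le> 0 \<longrightarrow> w = 0) \<and>
                     (p $ i + \<gamma> * f i x > 0 \<longrightarrow> w = p $ i + \<gamma> * f i (prox (\<gamma> * w) (f i) x)))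
       in (\<exists>!w. cond w) \<and>
          (\<forall>w. cond w \<longrightarrow>
             resolvent (scale_op \<gamma> (B_op f i)) (x, p) =
               {(if p $ i + \<gamma> * f i x \<le> 0 then x else prox (\<gamma> * w) (f i) x,
                 \<chi> j. if j = i then w else p $ j)})))"
proof -
  have "max_monotone (B_op f i)"
  proof (rule max_monotoneI_resolvent[OF monotone_op_B_op])
    fix z :: "'a \<times> (real^'n)"
    obtain x p where z: "z = (x, p)"
      by (cases z)
    obtain w where "is_omega (f i) (p$i) 1 x w"
      using is_omega_exists[OF conv lsc zero_less_one] by blast
    from resolvent_B_op[where f=f and i=i, OF conv lsc zero_less_one this]
    show "resolvent (B_op f i) z \<noteq> {}"
      unfolding z by simp
  qed
  moreover have "(\<exists>!w. is_omega (f i) (p$i) \<gamma> x w) \<and>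
      (\<forall>w. is_omega (f i) (p$i) \<gamma> x w \<longrightarrow> resolvent (scale_op \<gamma> (B_op f i)) (x, p) =
        {(if p$i + \<gamma> * f i x \<le> 0 then x else prox (\<gamma> * w) (f i) x, \<chi> j. if j = i then w else p$j)})"
    if \<gamma>: "\<gamma> > 0" for x p \<gamma>
    using is_omega_exists[OF conv lsc \<gamma>] is_omega_unique[OF conv lsc \<gamma>]
      resolvent_B_op[where f=f and i=i, OF conv lsc \<gamma>] by blast
  ultimately show ?thesis
    unfolding Let_def is_omega_def by blast
qed

end
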